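(* Consider a sequence of probability distributions $\{Q^k(x,E,\theta):E\in\mathcal{E},x\in\mathcal{X}_E,\theta\in\{\theta_0,\theta_1\}\}_{k\ge1}$ satisfying the low-informativeness condition; in particular $Q^k(x,E,\theta)\to\mathcal{Q}(x,E)$ for $\theta=\theta_0,\theta_1$. For each $k$, let $\mathcal{Q}^k(\cdot,E)$ be the corresponding solution of $$\min_{\mathcal{Q}'\ge0}\ \max_{\theta\in\{\theta_0,\theta_1\}}\ \max_{x\in\mathcal{X}_E}\Big|\frac{Q^k(x,E,\theta)}{\mathcal{Q}'(x,E)}-1\Big|\quad\text{subject to}\quad\sum_{x\in\mathcal{X}_E}\mathcal{Q}'(x,E)=1$$ for every $E\in\mathcal{E}$. Then $\mathcal{Q}^k(x,E)\to\mathcal{Q}(x,E)$ as $k\to\infty$ for all $E\in\mathcal{E}$ and $x\in\mathcal{X}_E$.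
   Context: $\mathcal{E}$ is a finite set of experiments, each $E$ with a finite outcome set $\mathcal{X}_E$. For each $k$, $Q^k(\cdot,E,\theta)$ is a probability distribution on $\mathcal{X}_E$ (outcome probabilities under $\Theta=\theta$). Low-informativeness condition: for each $E\in\mathcal{E}$ there is a probability distribution $\mathcal{Q}(\cdot,E)$ on $\mathcal{X}_E$ such that, for $\theta\in\{\theta_0,\theta_1\}$, $\sqrt{k}\big(Q^k(x,E,\theta)/\mathcal{Q}(x,E)-1\big)\to\alpha(x,E,\theta)$ with $\sum_x\alpha(x,E,\theta)\mathcal{Q}(x,E)=0$. *)

theory Defs
  imports "HOL-Analysis.Analysis"
begin

text \<open>Deviation |q/q' - 1| of a ratio, valued in the extended reals:
  it is +infinity when q' = 0 and q is nonzero; for q = q' = 0 the convention 0/0 = 0 gives 1.\<close>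
definition ratio_dev :: "real \<Rightarrow> real \<Rightarrow> ereal" where
  "ratio_dev q q' = (if q' = 0 \<and> q \<noteq> 0 then \<infinity> else ereal \<bar>q / q' - 1\<bar>)"

definition minmax_obj ::
  "('x \<Rightarrow> 'e \<Rightarrow> 'th \<Rightarrow> real) \<Rightarrow> 'th \<Rightarrow> 'th \<Rightarrow> 'x set \<Rightarrow> 'e \<Rightarrow> ('x \<Rightarrow> real) \<Rightarrow> ereal" where
  "minmax_obj Q th0 th1 XE E q' =
     (SUP th\<in>{th0, th1}. SUP x\<in>XE. ratio_dev (Q x E th) (q' x))"

definition is_prob_on :: "'x set \<Rightarrow> ('x \<Rightarrow> real) \<Rightarrow> bool" where
  "is_prob_on A p \<longleftrightarrow> (\<forall>x\<in>A. p x \<ge> 0) \<and> sum p A = 1"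

definition is_minmax_solution ::
  "('x \<Rightarrow> 'e \<Rightarrow> 'th \<Rightarrow> real) \<Rightarrow> 'th \<Rightarrow> 'th \<Rightarrow> 'x set \<Rightarrow> 'e \<Rightarrow> ('x \<Rightarrow> real) \<Rightarrow> bool" where
  "is_minmax_solution Q th0 th1 XE E q' \<longleftrightarrow>
     is_prob_on XE q' \<and>
     (\<forall>q''. is_prob_on XE q'' \<longrightarrow> minmax_obj Q th0 th1 XE E q' \<le> minmax_obj Q th0 th1 XE E q'')"

end

theory Submission
  imports Defs "HOL-Real_Asymp.Real_Asymp"
begin

text \<open>Low informativeness forces every ratio \<open>Q\<^sup>k(x,E,\<theta>) / \<Q>(x,E)\<close> to tend to 1, so in
  particular \<open>\<Q>(\<cdot>,E)\<close> has full support. Being feasible, \<open>\<Q>(\<cdot>,E)\<close> bounds the optimal value,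
  hence the optimal value tends to 0. The optimal value in turn bounds
  \<open>|Q\<^sup>k(x,E,\<theta>\<^sub>0) / \<Q>\<^sup>k(x,E) - 1|\<close>, so \<open>\<Q>\<^sup>k(x,E)\<close> is asymptotically equal to
  \<open>Q\<^sup>k(x,E,\<theta>\<^sub>0)\<close>, which tends to \<open>\<Q>(x,E)\<close>.
  The argument works experiment by experiment and uses only the consequence
  \<open>Q\<^sup>k / \<Q> \<longrightarrow> 1\<close> of low informativeness.\<close>

lemma tendsto_zero_if_sqrt_mult_tendsto:
  fixes a :: "nat \<Rightarrow> real"
  assumes "(\<lambda>k. sqrt (real k) * a k) \<longlonglongrightarrow> c"
  shows "a \<longlonglongrightarrow> 0"
proof -
  have "(\<lambda>k. inverse (sqrt (real k))) \<longlonglongrightarrow> 0"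
    by real_asymp
  then have "(\<lambda>k. inverse (sqrt (real k)) * (sqrt (real k) * a k)) \<longlonglongrightarrow> 0 * c"
    using assms by (rule tendsto_mult)
  moreover have "\<forall>\<^sub>F k in sequentially. inverse (sqrt (real k)) * (sqrt (real k) * a k) = a k"
    using eventually_gt_at_top[of 0] by eventually_elim simp
  ultimately show ?thesis
    by (simp add: tendsto_cong)
qed

text \<open>Since \<open>q / 0 = 0\<close>, a zero denominator would make the ratio constantly 0.\<close>

lemma nonzero_if_ratio_tendsto_one:
  fixes q :: "nat \<Rightarrow> 'a::real_normed_field"
  assumes "(\<lambda>k. q k / r) \<longlonglongrightarrow> 1"
  shows "r \<noteq> 0"
  using assms LIMSEQ_const_iff[of "0::'a" 1] by auto

lemma tendsto_if_ratio_tendsto_one: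
  fixes q :: "nat \<Rightarrow> 'a::real_normed_field"
  assumes "(\<lambda>k. q k / r) \<longlonglongrightarrow> 1"
  shows "q \<longlonglongrightarrow> r"
proof -
  have "(\<lambda>k. r * (q k / r)) \<longlonglongrightarrow> r * 1"
    using assms by (intro tendsto_intros)
  then show ?thesis
    using nonzero_if_ratio_tendsto_one[OF assms] by simp
qed

lemma tendsto_denominator_if_ratio_tendsto_one:
  fixes a b :: "nat \<Rightarrow> 'a::real_normed_field"
  assumes "a \<longlonglongrightarrow> L" and "(\<lambda>k. a k / b k) \<longlonglongrightarrow> 1"
  shows "b \<longlonglongrightarrow> L"
proof -
  have "(\<lambda>k. a k / (a k / b k)) \<longlonglongrightarrow> L / 1"
    using assms by (intro tendsto_divide) auto
  moreover have "\<forall>\<^sub>F k in sequentially. a k / b k \<noteq> 0"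
    using assms(2) by (rule tendsto_imp_eventually_ne) simp
  then have "\<forall>\<^sub>F k in sequentially. a k / (a k / b k) = b k"
    by eventually_elim auto
  ultimately show ?thesis
    by (simp add: tendsto_cong)
qed

lemma ratio_deviation_le_minmax_obj:
  assumes "th \<in> {th0, th1}" and "x \<in> XE"
  shows "ereal \<bar>Q x E th / q' x - 1\<bar> \<le> minmax_obj Q th0 th1 XE E q'"
proof -
  have "ereal \<bar>Q x E th / q' x - 1\<bar> \<le> ratio_dev (Q x E th) (q' x)"
    by (simp add: ratio_dev_def)
  also have "\<dots> \<le> minmax_obj Q th0 th1 XE E q'"
    unfolding minmax_obj_def using assms by (intro SUP_upper2[of th] SUP_upper)
  finally show ?thesis .
qed

lemma minmax_obj_le_sum_ratio_deviations:
  assumes "finite XE" and "\<And>y. y \<in> XE \<Longrightarrow> q' y \<noteq> 0"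
  shows "minmax_obj Q th0 th1 XE E q'
           \<le> ereal (\<Sum>th\<in>{th0, th1}. \<Sum>y\<in>XE. \<bar>Q y E th / q' y - 1\<bar>)"
  unfolding minmax_obj_def
proof (intro SUP_least)
  fix th y assume th: "th \<in> {th0, th1}" and y: "y \<in> XE"
  have "\<bar>Q y E th / q' y - 1\<bar> \<le> (\<Sum>z\<in>XE. \<bar>Q z E th / q' z - 1\<bar>)"
    using assms(1) y by (intro member_le_sum) auto
  also have "\<dots> \<le> (\<Sum>th'\<in>{th0, th1}. \<Sum>z\<in>XE. \<bar>Q z E th' / q' z - 1\<bar>)"
    using th by (intro member_le_sum[where f = "\<lambda>th'. \<Sum>z\<in>XE. \<bar>Q z E th' / q' z - 1\<bar>"])
      (auto intro: sum_nonneg)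
  finally show "ratio_dev (Q y E th) (q' y) \<le> ereal (\<Sum>th\<in>{th0, th1}. \<Sum>y\<in>XE. \<bar>Q y E th / q' y - 1\<bar>)"
    using assms(2)[OF y] by (simp add: ratio_dev_def)
qed

lemma minmax_solution_tendsto:
  assumes fin: "finite XE" and prob: "is_prob_on XE p"
    and ratio: "\<And>th y. th \<in> {th0, th1} \<Longrightarrow> y \<in> XE \<Longrightarrow> (\<lambda>k. Q k y E th / p y) \<longlonglongrightarrow> 1"
    and sol: "\<And>k. is_minmax_solution (Q k) th0 th1 XE E (q k)"
    and x: "x \<in> XE"
  shows "(\<lambda>k. q k x) \<longlonglongrightarrow> p x"
proof -
  have p_nonzero: "p y \<noteq> 0" if "y \<in> XE" for y
  proof -
    have "(\<lambda>k. Q k y E th0 / p y) \<longlonglongrightarrow> 1"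
      using ratio that by simp
    then show ?thesis
      by (rule nonzero_if_ratio_tendsto_one)
  qed
  define \<delta> where "\<delta> k = (\<Sum>th\<in>{th0, th1}. \<Sum>y\<in>XE. \<bar>Q k y E th / p y - 1\<bar>)" for k
  have "\<delta> \<longlonglongrightarrow> (\<Sum>th\<in>{th0, th1}. \<Sum>y\<in>XE. \<bar>1 - 1\<bar>)"
    unfolding \<delta>_def by (intro tendsto_intros ratio) auto
  then have \<delta>_tendsto: "\<delta> \<longlonglongrightarrow> 0"
    by simp
  have deviation_le_\<delta>: "\<bar>Q k x E th0 / q k x - 1\<bar> \<le> \<delta> k" for k
  proof -
    have "ereal \<bar>Q k x E th0 / q k x - 1\<bar> \<le> minmax_obj (Q k) th0 th1 XE E (q k)"
      using x by (intro ratio_deviation_le_minmax_obj) auto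
    also have "\<dots> \<le> minmax_obj (Q k) th0 th1 XE E p"
      using sol prob unfolding is_minmax_solution_def by blast
    also have "\<dots> \<le> ereal (\<delta> k)"
      unfolding \<delta>_def using fin p_nonzero by (rule minmax_obj_le_sum_ratio_deviations)
    finally show ?thesis by simp
  qed
  have "(\<lambda>k. Q k x E th0) \<longlonglongrightarrow> p x"
    by (rule tendsto_if_ratio_tendsto_one) (use ratio x in simp)
  moreover have "(\<lambda>k. Q k x E th0 / q k x - 1) \<longlonglongrightarrow> 0"
    by (rule Lim_null_comparison[of _ \<delta>]) (use deviation_le_\<delta> \<delta>_tendsto in simp_all)
  then have "(\<lambda>k. Q k x E th0 / q k x) \<longlonglongrightarrow> 1"
    by (simp add: LIM_zero_iff)
  ultimately show ?thesis
    by (rule tendsto_denominator_if_ratio_tendsto_one)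
qed

theorem proposition8:
  fixes Exps :: "'e set" and X :: "'e \<Rightarrow> 'x set"
    and Q :: "nat \<Rightarrow> 'x \<Rightarrow> 'e \<Rightarrow> 'th \<Rightarrow> real"
    and Qlim :: "'x \<Rightarrow> 'e \<Rightarrow> real"
    and Qsol :: "nat \<Rightarrow> 'x \<Rightarrow> 'e \<Rightarrow> real"
    and th0 th1 :: 'th
  assumes finE: "finite Exps"
    and finX: "\<And>E. E \<in> Exps \<Longrightarrow> finite (X E)"
    and probQ: "\<And>k E th. E \<in> Exps \<Longrightarrow> th \<in> {th0, th1} \<Longrightarrow> is_prob_on (X E) (\<lambda>x. Q k x E th)"
    and probQlim: "\<And>E. E \<in> Exps \<Longrightarrow> is_prob_on (X E) (\<lambda>x. Qlim x E)"
    and lowinf: "\<exists>\<alpha> :: 'x \<Rightarrow> 'e \<Rightarrow> 'th \<Rightarrow> real.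
       (\<forall>E\<in>Exps. \<forall>th\<in>{th0, th1}. \<forall>x\<in>X E.
          (\<lambda>k. sqrt (real k) * (Q k x E th / Qlim x E - 1)) \<longlonglongrightarrow> \<alpha> x E th) \<and>
       (\<forall>E\<in>Exps. \<forall>th\<in>{th0, th1}. (\<Sum>x\<in>X E. \<alpha> x E th * Qlim x E) = 0)"
    and sol: "\<And>k E. E \<in> Exps \<Longrightarrow> is_minmax_solution (Q k) th0 th1 (X E) E (\<lambda>x. Qsol k x E)"
  shows "\<forall>E\<in>Exps. \<forall>x\<in>X E. (\<lambda>k. Qsol k x E) \<longlonglongrightarrow> Qlim x E"
proof (intro ballI)
  fix E x assume E: "E \<in> Exps" and x: "x \<in> X E"
  obtain \<alpha> where \<alpha>: "\<And>th y. th \<in> {th0, th1} \<Longrightarrow> y \<in> X E \<Longrightarrow>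
      (\<lambda>k. sqrt (real k) * (Q k y E th / Qlim y E - 1)) \<longlonglongrightarrow> \<alpha> y E th"
    using lowinf E by blast
  have ratio: "(\<lambda>k. Q k y E th / Qlim y E) \<longlonglongrightarrow> 1" if "th \<in> {th0, th1}" "y \<in> X E" for th y
    using tendsto_zero_if_sqrt_mult_tendsto[OF \<alpha>[OF that]] by (simp add: LIM_zero_iff)
  show "(\<lambda>k. Qsol k x E) \<longlonglongrightarrow> Qlim x E"
    by (rule minmax_solution_tendsto[OF finX[OF E] probQlim[OF E] ratio sol[OF E] x])
qed

end
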